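(* Let $0<p<1$ and let $G$ be a simple graph with $m$ edges. Then $\mathcal{E}_p(G) \geq 2m^{p/2}$.
   Context: For a graph $G$ with adjacency eigenvalues $\lambda_1,\dots,\lambda_n$ and $p>0$, the $p$-energy is $\mathcal{E}_p(G) = \sum_{i=1}^n |\lambda_i|^p$. *)

theory Defs
  imports "Jordan_Normal_Form.Determinant" "Jordan_Normal_Form.Char_Poly" "HOL-Computational_Algebra.Polynomial"
begin

definition simple_graph :: "nat \<Rightarrow> (nat \<Rightarrow> nat \<Rightarrow> bool) \<Rightarrow> bool" where
  "simple_graph n E \<longleftrightarrow> (\<forall>i<n. \<forall>j<n. E i j \<longleftrightarrow> E j i) \<and> (\<forall>i<n. \<not> E i i)"

text \<open>Edge set: unordered pairs, represented as (i,j) with i<j.\<close>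
definition edges :: "nat \<Rightarrow> (nat \<Rightarrow> nat \<Rightarrow> bool) \<Rightarrow> (nat \<times> nat) set" where
  "edges n E = {(i, j). i < j \<and> j < n \<and> E i j}"

definition adj_matrix :: "nat \<Rightarrow> (nat \<Rightarrow> nat \<Rightarrow> bool) \<Rightarrow> real mat" where
  "adj_matrix n E = mat n n (\<lambda>(i, j). if E i j then 1 else 0)"

definition adj_eigenvalues :: "nat \<Rightarrow> (nat \<Rightarrow> nat \<Rightarrow> bool) \<Rightarrow> complex multiset" where
  "adj_eigenvalues n E = proots (char_poly (map_mat complex_of_real (adj_matrix n E)))"

definition p_energy :: "real \<Rightarrow> nat \<Rightarrow> (nat \<Rightarrow> nat \<Rightarrow> bool) \<Rightarrow> real" where
  "p_energy p n E = (\<Sum>\<mu>\<in>#adj_eigenvalues n E. cmod \<mu> powr p)"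

end

theory Submission
  imports Defs "Jordan_Normal_Form.Schur_Decomposition"
begin

(*
  Let x be the largest modulus of an adjacency eigenvalue. The eigenvalues sum to tr A = 0, so
  no modulus exceeds the sum of the others: 2 x <= sum |l_i|. Since |l_i| <= x and p <= 1 <= 2,
    sum |l_i|^p >= x^(p-1) sum |l_i| >= 2 x^p   and   sum |l_i|^p >= x^(p-2) sum |l_i|^2 >= 2 m x^(p-2),
  the latter because sum |l_i|^2 >= |sum l_i^2| = tr A^2 = 2m. If x^2 >= m the first bound is at
  least 2 m^(p/2), otherwise the second one is.
*)

lemma powr_mult_powr_diff_le:
  fixes t x p q :: real
  assumes "0 \<le> t" "t \<le> x" "p \<le> q"
  shows "t powr q * x powr (p - q) \<le> t powr p"
proof (cases "t = 0")
  case False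
  then have "0 < t" using assms(1) by simp
  then have "x powr (p - q) \<le> t powr (p - q)"
    using assms by (intro powr_mono2') auto
  then have "t powr q * x powr (p - q) \<le> t powr q * t powr (p - q)"
    by (simp add: mult_left_mono)
  also have "\<dots> = t powr p" by (simp flip: powr_add)
  finally show ?thesis .
qed simp

lemma powr_half_le_max:
  fixes x m p :: real
  assumes "0 < x" "0 \<le> m" "0 \<le> p" "p \<le> 2"
  shows "m powr (p / 2) \<le> max (x powr p) (m * x powr (p - 2))"
proof -
  have x_sq: "x\<^sup>2 powr (r / 2) = x powr r" for r
    using assms(1) by (simp add: powr_powr flip: powr_numeral)
  show ?thesis
  proof (cases "m \<le> x\<^sup>2")
    case True
    then have "m powr (p / 2) \<le> x\<^sup>2 powr (p / 2)"
      using assms by (intro powr_mono2) auto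
    then show ?thesis unfolding x_sq by simp
  next
    case False
    then have "0 < m" using assms(1) by (meson le_less_trans not_le zero_le_power2)
    have "m powr ((p - 2) / 2) \<le> x\<^sup>2 powr ((p - 2) / 2)"
      using False assms by (intro powr_mono2') auto
    then have "m * m powr ((p - 2) / 2) \<le> m * x powr (p - 2)"
      unfolding x_sq using \<open>0 < m\<close> by simp
    moreover have "m * m powr ((p - 2) / 2) = m powr (p / 2)"
      using \<open>0 < m\<close> by (simp add: powr_mult_base diff_divide_distrib)
    ultimately show ?thesis by simp
  qed
qed

lemma sum_mset_powr_ge_max_powr_mult:
  fixes T :: "real multiset" and x p q :: real
  assumes "\<forall>t\<in>#T. 0 \<le> t \<and> t \<le> x" and "p \<le> q"
  shows "x powr (p - q) * (\<Sum>t\<in>#T. t powr q) \<le> (\<Sum>t\<in>#T. t powr p)"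
proof -
  have "x powr (p - q) * (\<Sum>t\<in>#T. t powr q) = (\<Sum>t\<in>#T. t powr q * x powr (p - q))"
    by (induction T) (simp_all add: algebra_simps)
  also have "\<dots> \<le> (\<Sum>t\<in>#T. t powr p)"
    using assms by (intro sum_mset_mono powr_mult_powr_diff_le) auto
  finally show ?thesis .
qed

lemma sum_mset_powr_ge:
  fixes T :: "real multiset" and m p :: real
  assumes nonneg: "\<forall>t\<in>#T. 0 \<le> t"
    and balanced: "\<forall>t\<in>#T. 2 * t \<le> \<Sum>\<^sub># T"
    and squares: "2 * m \<le> (\<Sum>t\<in>#T. t\<^sup>2)"
    and "0 \<le> m" "0 < p" "p \<le> 1"
  shows "2 * m powr (p / 2) \<le> (\<Sum>t\<in>#T. t powr p)"
proof (cases "m = 0")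
  case True
  have "(\<Sum>t\<in>#T. 0) \<le> (\<Sum>t\<in>#T. t powr p)"
    by (intro sum_mset_mono) simp
  then show ?thesis using True by simp
next
  case False
  then have "0 < (\<Sum>t\<in>#T. t\<^sup>2)" using squares \<open>0 \<le> m\<close> by simp
  then have "T \<noteq> {#}" by auto
  define x where "x = Max_mset T"
  have "x \<in># T" unfolding x_def using \<open>T \<noteq> {#}\<close> by simp
  have bounded: "\<forall>t\<in>#T. 0 \<le> t \<and> t \<le> x"
    unfolding x_def using nonneg by simp
  have "0 < x"
  proof (rule ccontr)
    assume "\<not> 0 < x"
    then have "\<forall>t\<in>#T. t = 0" using bounded by force
    then have "(\<Sum>t\<in>#T. t\<^sup>2) = 0" by (auto intro!: sum_mset.neutral)
    then show False using \<open>0 < (\<Sum>t\<in>#T. t\<^sup>2)\<close> by simp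
  qed
  have "2 * m * x powr (p - 2) \<le> (\<Sum>t\<in>#T. t\<^sup>2) * x powr (p - 2)"
    using squares by (rule mult_right_mono) simp
  also have "(\<Sum>t\<in>#T. t\<^sup>2) = (\<Sum>t\<in>#T. t powr 2)"
    using nonneg by (intro arg_cong[where f = sum_mset] image_mset_cong) (simp add: powr_numeral)
  also have "\<dots> * x powr (p - 2) \<le> (\<Sum>t\<in>#T. t powr p)"
    using bounded \<open>p \<le> 1\<close> sum_mset_powr_ge_max_powr_mult[of T x p 2] by (simp add: mult.commute)
  finally have squares_bound: "2 * m * x powr (p - 2) \<le> (\<Sum>t\<in>#T. t powr p)" .
  have "2 * x powr p = x powr (p - 1) * (2 * x)"
    using \<open>0 < x\<close> by (simp add: powr_diff)
  also have "\<dots> \<le> x powr (p - 1) * \<Sum>\<^sub># T"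
    using balanced \<open>x \<in># T\<close> by (intro mult_left_mono) auto
  also have "\<Sum>\<^sub># T = (\<Sum>t\<in>#T. t powr 1)"
    using nonneg by (simp add: image_mset_cong)
  also have "x powr (p - 1) * (\<Sum>t\<in>#T. t powr 1) \<le> (\<Sum>t\<in>#T. t powr p)"
    using bounded \<open>p \<le> 1\<close> by (intro sum_mset_powr_ge_max_powr_mult) auto
  finally have max_bound: "2 * x powr p \<le> (\<Sum>t\<in>#T. t powr p)" .
  have "m powr (p / 2) \<le> max (x powr p) (m * x powr (p - 2))"
    using \<open>0 < x\<close> assms by (intro powr_half_le_max) auto
  then show ?thesis using squares_bound max_bound by linarith
qed

lemma norm_sum_mset_le:
  fixes f :: "'b \<Rightarrow> 'a::real_normed_vector"
  shows "norm (\<Sum>x\<in>#M. f x) \<le> (\<Sum>x\<in>#M. norm (f x))"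
  by (induction M) (auto intro: order_trans[OF norm_triangle_ineq])

lemma zero_sum_mset_double_norm_le:
  fixes M :: "'a::real_normed_vector multiset"
  assumes "\<Sum>\<^sub># M = 0" and "x \<in># M"
  shows "2 * norm x \<le> (\<Sum>y\<in>#M. norm y)"
proof -
  obtain M' where M: "M = add_mset x M'"
    using assms(2) by (metis mset_add)
  have "norm x = norm (\<Sum>\<^sub># M')"
    using assms(1) unfolding M by (simp add: add_eq_0_iff2 norm_minus_cancel)
  also have "\<dots> \<le> (\<Sum>y\<in>#M'. norm y)"
    using norm_sum_mset_le[of "\<lambda>y. y" M'] by simp
  finally show ?thesis unfolding M by simp
qed

theorem sum_mset_norm_powr_ge:
  fixes Z :: "'a::real_normed_div_algebra multiset" and m p :: real
  assumes "\<Sum>\<^sub># Z = 0" and "2 * m \<le> norm (\<Sum>z\<in>#Z. z\<^sup>2)"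
    and "0 \<le> m" "0 < p" "p \<le> 1"
  shows "2 * m powr (p / 2) \<le> (\<Sum>z\<in>#Z. norm z powr p)"
proof -
  let ?T = "image_mset norm Z"
  have "2 * m \<le> (\<Sum>z\<in>#Z. norm (z\<^sup>2))"
    using assms(2) norm_sum_mset_le[of power2 Z] by linarith
  also have "\<dots> = (\<Sum>t\<in>#?T. t\<^sup>2)"
    by (simp add: image_mset.compositionality o_def norm_power)
  finally have "2 * m \<le> (\<Sum>t\<in>#?T. t\<^sup>2)" .
  moreover have "\<forall>t\<in>#?T. 2 * t \<le> \<Sum>\<^sub># ?T"
    using zero_sum_mset_double_norm_le[OF assms(1)] by auto
  ultimately have "2 * m powr (p / 2) \<le> (\<Sum>t\<in>#?T. t powr p)"
    using assms(3-5) by (intro sum_mset_powr_ge) auto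
  then show ?thesis by (simp add: image_mset.compositionality o_def)
qed

definition mat_trace :: "'a::comm_monoid_add mat \<Rightarrow> 'a" where
  "mat_trace A = (\<Sum>i<dim_row A. A $$ (i, i))"

lemma (in semiring_hom) mat_trace_hom:
  assumes "A \<in> carrier_mat n n"
  shows "mat_trace (mat\<^sub>h A) = hom (mat_trace A)"
  using assms by (simp add: mat_trace_def hom_sum)

lemma index_mult_mat_sum:
  assumes "A \<in> carrier_mat n m" "B \<in> carrier_mat m l" "i < n" "j < l"
  shows "(A * B) $$ (i, j) = (\<Sum>k<m. A $$ (i, k) * B $$ (k, j))"
  using assms by (simp add: scalar_prod_def lessThan_atLeast0)

lemma mat_trace_mult_comm:
  fixes A B :: "'a::comm_semiring_0 mat"
  assumes A: "A \<in> carrier_mat n m" and B: "B \<in> carrier_mat m n"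
  shows "mat_trace (A * B) = mat_trace (B * A)"
proof -
  have "mat_trace (A * B) = (\<Sum>i<n. \<Sum>k<m. A $$ (i, k) * B $$ (k, i))"
    using A B by (simp add: mat_trace_def index_mult_mat_sum[OF A B] del: index_mult_mat(1))
  also have "\<dots> = (\<Sum>k<m. \<Sum>i<n. B $$ (k, i) * A $$ (i, k))"
    by (subst sum.swap) (simp add: mult.commute)
  also have "\<dots> = mat_trace (B * A)"
    using A B by (simp add: mat_trace_def index_mult_mat_sum[OF B A] del: index_mult_mat(1))
  finally show ?thesis .
qed

lemma similar_mat_wit_trace:
  fixes A B :: "'a::comm_semiring_1 mat"
  assumes "similar_mat_wit A B P Q"
  shows "mat_trace A = mat_trace B"
proof -
  define n where "n = dim_row A"
  note wit = similar_mat_witD[OF n_def assms]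
  have "mat_trace A = mat_trace (Q * (P * B))"
    unfolding wit(3) using wit(5-7) by (intro mat_trace_mult_comm[where n = n and m = n]) auto
  also have "Q * (P * B) = (Q * P) * B"
    using assoc_mult_mat[OF wit(7,6,5)] by simp
  also have "\<dots> = B"
    using wit(2,5) by simp
  finally show ?thesis .
qed

lemma upper_triangular_mult:
  fixes A B :: "'a::semiring_0 mat"
  assumes A: "A \<in> carrier_mat n n" and B: "B \<in> carrier_mat n n"
    and "upper_triangular A" "upper_triangular B"
  shows "upper_triangular (A * B)"
proof
  fix i j assume "j < i" "i < dim_row (A * B)"
  then have "i < n" "j < n" using A by auto
  have "A $$ (i, k) * B $$ (k, j) = 0" if "k < n" for k
    using assms that \<open>j < i\<close> \<open>i < n\<close> by (cases "k < i") (auto simp: upper_triangular_def)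
  then show "(A * B) $$ (i, j) = 0"
    using index_mult_mat_sum[OF A B \<open>i < n\<close> \<open>j < n\<close>] by (simp del: index_mult_mat(1))
qed

lemma upper_triangular_mult_diag:
  fixes A B :: "'a::semiring_0 mat"
  assumes A: "A \<in> carrier_mat n n" and B: "B \<in> carrier_mat n n"
    and "upper_triangular A" "upper_triangular B" and "i < n"
  shows "(A * B) $$ (i, i) = A $$ (i, i) * B $$ (i, i)"
proof -
  have "A $$ (i, k) * B $$ (k, i) = 0" if "k < n" "k \<noteq> i" for k
    using assms that by (cases "k < i") (auto simp: upper_triangular_def)
  then have "(\<Sum>k<n. A $$ (i, k) * B $$ (k, i)) = A $$ (i, i) * B $$ (i, i)"
    using \<open>i < n\<close> by (subst sum.remove[of _ i]) (auto intro: sum.neutral)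
  then show ?thesis using index_mult_mat_sum[OF A B \<open>i < n\<close> \<open>i < n\<close>] by simp
qed

lemma upper_triangular_pow_mat:
  fixes A :: "'a::semiring_1 mat"
  assumes A: "A \<in> carrier_mat n n" and "upper_triangular A"
  shows "upper_triangular (A ^\<^sub>m k)"
  using assms by (induction k) (auto intro: upper_triangular_mult[OF pow_carrier_mat[OF A] A])

lemma upper_triangular_pow_mat_diag:
  fixes A :: "'a::semiring_1 mat"
  assumes A: "A \<in> carrier_mat n n" and "upper_triangular A" and "i < n"
  shows "(A ^\<^sub>m k) $$ (i, i) = A $$ (i, i) ^ k"
  using assms by (induction k)
    (simp_all add: upper_triangular_mult_diag[OF pow_carrier_mat[OF A] A] upper_triangular_pow_mat power_commutes
      del: index_mult_mat(1))

lemma proots_prod_list_linear_factors: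
  "proots (\<Prod>a\<leftarrow>as. [:- a, 1:]) = mset (as :: 'a::idom list)"
proof (induction as)
  case (Cons a as)
  have "proots ([:- a, 1:] * (\<Prod>a\<leftarrow>as. [:- a, 1:])) = {#a#} + mset as"
    using Cons.IH by (subst proots_mult) (auto simp: prod_list_zero_iff)
  then show ?case by simp
qed simp

theorem sum_mset_proots_char_poly_power:
  fixes A :: "complex mat"
  assumes A: "A \<in> carrier_mat n n"
  shows "(\<Sum>a\<in>#proots (char_poly A). a ^ k) = mat_trace (A ^\<^sub>m k)"
proof -
  obtain es where char_poly: "char_poly A = (\<Prod>e\<leftarrow>es. [:- e, 1:])"
    using char_poly_factorized[OF A] by blast
  obtain B P Q where schur: "schur_decomposition A es = (B, P, Q)"
    by (cases "schur_decomposition A es") auto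
  have sim: "similar_mat_wit A B P Q" and upper: "upper_triangular B" and diag: "diag_mat B = es"
    using schur_decomposition[OF A char_poly schur] by auto
  have B: "B \<in> carrier_mat n n"
    using similar_mat_witD2[OF A sim] by auto
  have "(\<Sum>a\<in>#proots (char_poly A). a ^ k) = (\<Sum>i<n. B $$ (i, i) ^ k)"
    unfolding char_poly proots_prod_list_linear_factors diag[symmetric]
    using B by (simp add: diag_mat_def sum_unfold_sum_mset lessThan_atLeast0 multiset.map_comp o_def)
  also have "\<dots> = mat_trace (B ^\<^sub>m k)"
    using B upper by (simp add: mat_trace_def upper_triangular_pow_mat_diag)
  also have "\<dots> = mat_trace (A ^\<^sub>m k)"
    using similar_mat_wit_trace[OF similar_mat_wit_pow[OF sim]] by simp
  finally show ?thesis .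
qed

lemma card_adjacent_pairs:
  assumes G: "simple_graph n E"
  shows "card {(i, j). i < n \<and> j < n \<and> E i j} = 2 * card (edges n E)"
proof -
  have pairs: "{(i, j). i < n \<and> j < n \<and> E i j} = edges n E \<union> prod.swap ` edges n E"
  proof (intro equalityI subsetI)
    fix x assume "x \<in> {(i, j). i < n \<and> j < n \<and> E i j}"
    then obtain i j where x: "x = (i, j)" "i < n" "j < n" "E i j" by auto
    then have "i \<noteq> j" using G unfolding simple_graph_def by auto
    then have "(i, j) \<in> edges n E \<or> (j, i) \<in> edges n E"
      using x G unfolding edges_def simple_graph_def by auto
    then show "x \<in> edges n E \<union> prod.swap ` edges n E"
      using x by force
  qed (use G in \<open>auto simp: edges_def simple_graph_def\<close>)
  have "finite (edges n E)"
    by (rule finite_subset[of _ "{..<n} \<times> {..<n}"]) (auto simp: edges_def)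
  moreover have "edges n E \<inter> prod.swap ` edges n E = {}"
    unfolding edges_def by auto
  ultimately show ?thesis
    unfolding pairs by (simp add: card_Un_disjoint card_image)
qed

lemma mat_trace_adj_matrix:
  assumes "simple_graph n E"
  shows "mat_trace (adj_matrix n E) = 0"
  using assms by (simp add: mat_trace_def adj_matrix_def simple_graph_def)

lemma mat_trace_adj_matrix_square:
  assumes G: "simple_graph n E"
  shows "mat_trace (adj_matrix n E ^\<^sub>m 2) = 2 * real (card (edges n E))"
proof -
  let ?A = "adj_matrix n E"
  have A: "?A \<in> carrier_mat n n" by (simp add: adj_matrix_def)
  have "?A ^\<^sub>m 2 = ?A * ?A"
    using A by (simp add: numeral_2_eq_2)
  then have "mat_trace (?A ^\<^sub>m 2) = (\<Sum>i<n. \<Sum>j<n. ?A $$ (i, j) * ?A $$ (j, i))"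
    using A by (simp add: mat_trace_def index_mult_mat_sum[OF A A] del: index_mult_mat(1))
  also have "\<dots> = (\<Sum>i<n. \<Sum>j<n. of_bool (E i j))"
    using G by (intro sum.cong refl) (auto simp: adj_matrix_def simple_graph_def)
  also have "\<dots> = (\<Sum>i<n. real (card ({..<n} \<inter> {j. E i j})))"
    by simp
  also have "\<dots> = real (card (SIGMA i:{..<n}. {..<n} \<inter> {j. E i j}))"
    by (simp add: card_SigmaI)
  also have "(SIGMA i:{..<n}. {..<n} \<inter> {j. E i j}) = {(i, j). i < n \<and> j < n \<and> E i j}"
    by auto
  finally show ?thesis using card_adjacent_pairs[OF G] by simp
qed

theorem sum_mset_adj_eigenvalues_power:
  fixes n k :: nat and E :: "nat \<Rightarrow> nat \<Rightarrow> bool"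
  shows "(\<Sum>\<mu>\<in>#adj_eigenvalues n E. \<mu> ^ k) = complex_of_real (mat_trace (adj_matrix n E ^\<^sub>m k))"
proof -
  have A: "adj_matrix n E \<in> carrier_mat n n" by (simp add: adj_matrix_def)
  then show ?thesis
    unfolding adj_eigenvalues_def
    by (simp add: sum_mset_proots_char_poly_power[of _ n] of_real_hom.mat_hom_pow[OF A, symmetric]
        of_real_hom.mat_trace_hom[of _ n])
qed

theorem proposition5p3:
  fixes p :: real and n :: nat and E :: "nat \<Rightarrow> nat \<Rightarrow> bool"
  assumes "0 < p" and "p < 1"
    and "simple_graph n E"
  shows "p_energy p n E \<ge> 2 * real (card (edges n E)) powr (p / 2)"
proof -
  have A: "adj_matrix n E \<in> carrier_mat n n" by (simp add: adj_matrix_def)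
  have "(\<Sum>\<mu>\<in>#adj_eigenvalues n E. \<mu>) = 0"
    using sum_mset_adj_eigenvalues_power[where k = 1] mat_trace_adj_matrix[OF assms(3)] A by simp
  moreover have "(\<Sum>\<mu>\<in>#adj_eigenvalues n E. \<mu>\<^sup>2) = of_real (2 * real (card (edges n E)))"
    using sum_mset_adj_eigenvalues_power[where k = 2] mat_trace_adj_matrix_square[OF assms(3)] by simp
  ultimately show ?thesis
    unfolding p_energy_def using assms(1,2) by (intro sum_mset_norm_powr_ge) auto
qed

end
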